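(* Let $D$ be a non-commutative division ring with center $F$, let $M$ be an irreducible metabelian locally solvable maximal subgroup of $D^*$, and let $A$ be a maximal abelian normal subgroup of $M$. If $N$ is a subgroup of $M$ with $A\subsetneq N$, then $N$ is irreducible.
   Context: $D^*$ is the multiplicative group of $D$; maximal subgroup = proper subgroup maximal among proper subgroups. A subgroup $G\le D^*$ is irreducible if the division subring $F(G)$ generated by $F\cup G$ equals $D$. Locally solvable: every finitely generated subgroup solvable. Metabelian: the derived subgroup is abelian. A maximal abelian normal subgroup is an abelian normal subgroup not properly contained in another abelian normal subgroup. *)

theory Defs
  imports Main "HOL-Algebra.Solvable_Groups"
begin

definition Dstar :: "'a::division_ring monoid" where
  "Dstar = \<lparr>carrier = - {0}, mult = (*), one = 1\<rparr>"

definition center :: "'a::division_ring set" where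
  "center = {z. \<forall>x. z * x = x * z}"

definition division_subring :: "'a::division_ring set \<Rightarrow> bool" where
  "division_subring S \<longleftrightarrow> 0 \<in> S \<and> 1 \<in> S \<and>
     (\<forall>x\<in>S. \<forall>y\<in>S. x + y \<in> S \<and> x * y \<in> S) \<and>
     (\<forall>x\<in>S. - x \<in> S) \<and> (\<forall>x\<in>S. inverse x \<in> S)"

definition gen_division_subring :: "'a::division_ring set \<Rightarrow> 'a set" where
  "gen_division_subring X = \<Inter> {S. division_subring S \<and> X \<subseteq> S}"

definition irreducible_subgroup :: "'a::division_ring set \<Rightarrow> bool" where
  "irreducible_subgroup G \<longleftrightarrow> gen_division_subring (center \<union> G) = UNIV"

definition maximal_subgroup :: "'a::division_ring set \<Rightarrow> bool" where
  "maximal_subgroup M \<longleftrightarrow> subgroup M Dstar \<and> M \<noteq> carrier Dstar \<and>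
     (\<forall>K. subgroup K Dstar \<and> M \<subseteq> K \<and> K \<noteq> carrier Dstar \<longrightarrow> K = M)"

definition locally_solvable :: "('a, 'b) monoid_scheme \<Rightarrow> 'a set \<Rightarrow> bool" where
  "locally_solvable G H \<longleftrightarrow>
     (\<forall>S. finite S \<and> S \<subseteq> H \<longrightarrow> solvable (G\<lparr>carrier := generate G S\<rparr>))"

definition abelian_set :: "('a, 'b) monoid_scheme \<Rightarrow> 'a set \<Rightarrow> bool" where
  "abelian_set G H \<longleftrightarrow> (\<forall>x\<in>H. \<forall>y\<in>H. x \<otimes>\<^bsub>G\<^esub> y = y \<otimes>\<^bsub>G\<^esub> x)"

definition metabelian :: "('a, 'b) monoid_scheme \<Rightarrow> 'a set \<Rightarrow> bool" where
  "metabelian G H \<longleftrightarrow> abelian_set G (derived G H)"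

definition max_abelian_normal :: "('a, 'b) monoid_scheme \<Rightarrow> 'a set \<Rightarrow> 'a set \<Rightarrow> bool" where
  "max_abelian_normal G M A \<longleftrightarrow>
     A \<lhd> G\<lparr>carrier := M\<rparr> \<and> abelian_set G A \<and>
     (\<forall>B. B \<lhd> G\<lparr>carrier := M\<rparr> \<and> abelian_set G B \<and> A \<subseteq> B \<longrightarrow> B = A)"

end

theory Submission
  imports Defs
begin

text \<open>Let \<open>K\<close> be a division subring normalized by the maximal subgroup \<open>M\<close>. Its normalizer
  in \<open>D\<^sup>*\<close> contains \<open>M\<close>, so either it is \<open>D\<^sup>*\<close>, and then \<open>K = D\<close> or \<open>K\<close> is central by
  the Cartan-Brauer-Hua theorem, or \<open>K\<^sup>* \<subseteq> M\<close>, and then \<open>K\<close> is commutative by Hua's theorem,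
  because the commutators of the metabelian group \<open>M\<close> commute. If moreover \<open>A \<subseteq> K\<close> and
  \<open>K\<close> is commutative, then \<open>K \<inter> M\<close> is an abelian normal subgroup of \<open>M\<close> containing \<open>A\<close>,
  so \<open>K \<inter> M = A\<close>.

  Applied to \<open>K = F(A \<union> E)\<close> with \<open>E = F(M')\<close> this shows \<open>M' \<subseteq> A\<close>; the alternative
  \<open>K = D\<close> is impossible, because then every commutator of \<open>a \<in> A\<close> and \<open>e \<in> E\<close> would be
  central, which forces \<open>a\<close> and \<open>e\<close> to commute and \<open>D\<close> to be commutative. Hence every
  \<open>N \<supseteq> A\<close> is normal in \<open>M\<close>, and applied to \<open>K = F(N)\<close> the alternative \<open>K \<inter> M = A\<close>
  contradicts \<open>A \<subset> N\<close>.\<close>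

section \<open>Multiplicative subgroups of \<open>D\<^sup>*\<close>\<close>

lemma Dstar_simps [simp]:
  "carrier (Dstar :: 'a::division_ring monoid) = - {0}"
  "mult (Dstar :: 'a::division_ring monoid) = (*)"
  "one (Dstar :: 'a::division_ring monoid) = 1"
  by (simp_all add: Dstar_def)

lemma abelian_set_Dstar_iff:
  "abelian_set (Dstar :: 'a::division_ring monoid) S \<longleftrightarrow> (\<forall>x\<in>S. \<forall>y\<in>S. x * y = y * x)"
  by (simp add: abelian_set_def)

lemma group_Dstar: "group (Dstar :: 'a::division_ring monoid)"
proof (rule groupI)
  show "\<exists>y\<in>carrier Dstar. y \<otimes>\<^bsub>Dstar\<^esub> x = \<one>\<^bsub>Dstar\<^esub>" if "x \<in> carrier Dstar" for x :: 'a
    using that by (intro bexI[of _ "inverse x"]) simp_all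
qed (simp_all add: mult.assoc)

lemma inv_Dstar_restrict:
  fixes S :: "'a::division_ring set"
  assumes "x \<in> S" "inverse x \<in> S" "x \<noteq> 0"
  shows "inv\<^bsub>Dstar\<lparr>carrier := S\<rparr>\<^esub> x = inverse x"
  unfolding m_inv_def using assms
  by (intro the_equality) (auto simp: Dstar_def intro: inverse_unique[symmetric])

lemma inv_Dstar:
  fixes x :: "'a::division_ring"
  assumes "x \<noteq> 0"
  shows "inv\<^bsub>Dstar\<^esub> x = inverse x"
  unfolding m_inv_def using assms
  by (intro the_equality) (auto simp: Dstar_def intro: inverse_unique[symmetric])

definition mult_subgroup :: "'a::division_ring set \<Rightarrow> bool" where
  "mult_subgroup H \<longleftrightarrow>
     H \<subseteq> - {0} \<and> 1 \<in> H \<and> (\<forall>x\<in>H. \<forall>y\<in>H. x * y \<in> H) \<and> (\<forall>x\<in>H. inverse x \<in> H)"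

lemma mult_subgroupD:
  assumes "mult_subgroup H"
  shows "x \<in> H \<Longrightarrow> x \<noteq> 0" and "1 \<in> H"
    and "x \<in> H \<Longrightarrow> y \<in> H \<Longrightarrow> x * y \<in> H" and "x \<in> H \<Longrightarrow> inverse x \<in> H"
  using assms by (auto simp: mult_subgroup_def)

lemma mult_subgroup_Int: "mult_subgroup H \<Longrightarrow> mult_subgroup K \<Longrightarrow> mult_subgroup (H \<inter> K)"
  by (auto simp: mult_subgroup_def)

lemma subgroup_Dstar_iff: "subgroup H (Dstar :: 'a::division_ring monoid) \<longleftrightarrow> mult_subgroup H"
proof
  assume "subgroup H (Dstar :: 'a monoid)"
  then interpret subgroup H "Dstar :: 'a monoid" .
  have "inverse x \<in> H" if "x \<in> H" for x
  proof -
    have "x \<noteq> 0" using subset that by auto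
    then show ?thesis using m_inv_closed[OF that] by (simp add: inv_Dstar)
  qed
  then show "mult_subgroup H"
    unfolding mult_subgroup_def using subset m_closed one_closed by auto
next
  assume "mult_subgroup H"
  then show "subgroup H (Dstar :: 'a monoid)"
    by unfold_locales (auto simp: mult_subgroup_def subset_iff inv_Dstar)
qed

lemma subgroup_Dstar_restrict_iff:
  fixes S :: "'a::division_ring set"
  assumes "mult_subgroup S"
  shows "subgroup H (Dstar\<lparr>carrier := S\<rparr>) \<longleftrightarrow> mult_subgroup H \<and> H \<subseteq> S"
proof -
  have inv: "inv\<^bsub>Dstar\<lparr>carrier := S\<rparr>\<^esub> x = inverse x" if "x \<in> S" for x
    using assms that by (intro inv_Dstar_restrict) (auto simp: mult_subgroup_def)
  show ?thesis
  proof
    assume "subgroup H (Dstar\<lparr>carrier := S\<rparr>)"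
    then interpret subgroup H "Dstar\<lparr>carrier := S\<rparr>" .
    have "inverse x \<in> H" if "x \<in> H" for x
    proof -
      have "inv\<^bsub>Dstar\<lparr>carrier := S\<rparr>\<^esub> x = inverse x" using that subset by (auto intro: inv)
      moreover have "inv\<^bsub>Dstar\<lparr>carrier := S\<rparr>\<^esub> x \<in> H" using that by (rule m_inv_closed)
      ultimately show ?thesis by (simp only:)
    qed
    then show "mult_subgroup H \<and> H \<subseteq> S"
      using subset m_closed one_closed assms by (auto simp: mult_subgroup_def)
  next
    assume "mult_subgroup H \<and> H \<subseteq> S"
    then show "subgroup H (Dstar\<lparr>carrier := S\<rparr>)"
      by unfold_locales (auto simp: mult_subgroup_def inv subset_iff)
  qed
qed

lemma maximal_subgroup_mult_subgroup: "maximal_subgroup M \<Longrightarrow> mult_subgroup M"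
  by (simp add: maximal_subgroup_def subgroup_Dstar_iff)

lemma maximal_subgroup_maximal:
  "maximal_subgroup M \<Longrightarrow> mult_subgroup H \<Longrightarrow> M \<subseteq> H \<Longrightarrow> H = - {0} \<or> H = M"
  by (auto simp: maximal_subgroup_def subgroup_Dstar_iff)

definition normalizes :: "'a::division_ring set \<Rightarrow> 'a set \<Rightarrow> bool" where
  "normalizes M S \<longleftrightarrow> (\<forall>m\<in>M. \<forall>s\<in>S. m * s * inverse m \<in> S)"

lemma normalizes_self: "mult_subgroup M \<Longrightarrow> normalizes M M"
  by (simp add: normalizes_def mult_subgroupD)

lemma normal_Dstar_restrict_iff:
  fixes M A :: "'a::division_ring set"
  assumes "mult_subgroup M"
  shows "A \<lhd> Dstar\<lparr>carrier := M\<rparr> \<longleftrightarrow> mult_subgroup A \<and> A \<subseteq> M \<and> normalizes M A"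
proof -
  have "group (Dstar\<lparr>carrier := M\<rparr>)"
    using assms group_Dstar subgroup.subgroup_is_group subgroup_Dstar_iff by blast
  moreover have "inv\<^bsub>Dstar\<lparr>carrier := M\<rparr>\<^esub> m = inverse m" if "m \<in> M" for m
    using that assms by (intro inv_Dstar_restrict) (auto simp: mult_subgroup_def)
  ultimately show ?thesis
    by (simp add: group.normal_inv_iff subgroup_Dstar_restrict_iff[OF assms] normalizes_def)
qed

lemma max_abelian_normal_Dstar_iff:
  fixes M A :: "'a::division_ring set"
  assumes "mult_subgroup M"
  shows "max_abelian_normal Dstar M A \<longleftrightarrow>
    mult_subgroup A \<and> A \<subseteq> M \<and> normalizes M A \<and> abelian_set Dstar A \<and>
    (\<forall>B. mult_subgroup B \<and> B \<subseteq> M \<and> normalizes M B \<and> abelian_set Dstar B \<and> A \<subseteq> B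
      \<longrightarrow> B = A)"
  unfolding max_abelian_normal_def normal_Dstar_restrict_iff[OF assms] by blast

lemma max_abelian_normal_DstarD:
  fixes M A :: "'a::division_ring set"
  assumes "mult_subgroup M" "max_abelian_normal Dstar M A"
  shows "mult_subgroup A" "A \<subseteq> M" "normalizes M A" "abelian_set Dstar A"
  using assms max_abelian_normal_Dstar_iff by blast+

section \<open>Conjugation and commutators\<close>

lemma conj_inverse:
  fixes b a :: "'a::division_ring"
  assumes "b \<noteq> 0"
  shows "b * inverse a * inverse b = inverse (b * a * inverse b)"
  using assms by (cases "a = 0") (simp_all add: nonzero_inverse_mult_distrib mult.assoc)

lemma conj_mult:
  fixes b x y :: "'a::division_ring"
  assumes "b \<noteq> 0"
  shows "b * (x * y) * inverse b = (b * x * inverse b) * (b * y * inverse b)"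
proof -
  have "(b * x * inverse b) * (b * y * inverse b) = b * x * (inverse b * b) * y * inverse b"
    by (simp add: mult.assoc)
  also have "\<dots> = b * (x * y) * inverse b" using assms by (simp add: mult.assoc)
  finally show ?thesis by simp
qed

lemma conj_conj:
  fixes x y s :: "'a::division_ring"
  assumes "x \<noteq> 0" "y \<noteq> 0"
  shows "(x * y) * s * inverse (x * y) = x * (y * s * inverse y) * inverse x"
  using assms by (simp add: nonzero_inverse_mult_distrib mult.assoc)

definition commutator :: "'a::division_ring \<Rightarrow> 'a \<Rightarrow> 'a" where
  "commutator x y = x * y * inverse x * inverse y"

definition commutators :: "'a::division_ring set \<Rightarrow> 'a set" where
  "commutators S = {commutator x y | x y. x \<in> S \<and> y \<in> S}"

lemma commutator_zero [simp]: "commutator 0 y = 0" "commutator x 0 = 0"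
  by (simp_all add: commutator_def)

lemma commutator_mult_swap: "commutator x y * y * x = x * y"
proof (cases "x = 0 \<or> y = 0")
  case False
  then have "commutator x y * y * x = x * y * inverse x * (inverse y * y) * x"
    by (simp add: commutator_def mult.assoc)
  also have "\<dots> = x * y" using False by (simp add: mult.assoc)
  finally show ?thesis .
qed auto

lemma commutator_mult_right: "y \<noteq> 0 \<Longrightarrow> commutator x y * y = x * y * inverse x"
  by (simp add: commutator_def mult.assoc)

lemma conj_commutator:
  fixes b x y :: "'a::division_ring"
  assumes "b \<noteq> 0"
  shows "b * commutator x y * inverse b = commutator (b * x * inverse b) (b * y * inverse b)"
  unfolding commutator_def conj_inverse[OF assms, symmetric] conj_mult[OF assms, symmetric]
  by (simp add: mult.assoc)

lemma normalizes_commutators: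
  assumes "0 \<notin> M" "normalizes M S"
  shows "normalizes M (commutators S)"
  unfolding normalizes_def
proof (intro ballI)
  fix m c assume "m \<in> M" "c \<in> commutators S"
  then obtain x y where "x \<in> S" "y \<in> S" "c = commutator x y" by (auto simp: commutators_def)
  moreover have "m \<noteq> 0" using \<open>m \<in> M\<close> assms(1) by auto
  ultimately show "m * c * inverse m \<in> commutators S"
    using assms(2) \<open>m \<in> M\<close> by (auto simp: commutators_def normalizes_def conj_commutator)
qed

lemma commutators_subset: "mult_subgroup M \<Longrightarrow> commutators M \<subseteq> M"
  by (auto simp: commutators_def commutator_def mult_subgroupD)

lemma normalizes_if_commutators_subset:
  assumes N: "mult_subgroup N" and "N \<subseteq> M" "commutators M \<subseteq> N"
  shows "normalizes M N"
  unfolding normalizes_def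
proof (intro ballI)
  fix m n assume "m \<in> M" "n \<in> N"
  then have "commutator m n \<in> N" using assms(2,3) by (auto simp: commutators_def)
  then have "commutator m n * n \<in> N" using \<open>n \<in> N\<close> mult_subgroupD(3)[OF N] by blast
  then show "m * n * inverse m \<in> N"
    using mult_subgroupD(1)[OF N \<open>n \<in> N\<close>] by (simp add: commutator_mult_right)
qed

lemma commutator_in_derived:
  assumes "mult_subgroup M" "x \<in> M" "y \<in> M"
  shows "commutator x y \<in> derived Dstar M"
proof -
  have "x \<noteq> 0" "y \<noteq> 0" using assms by (simp_all add: mult_subgroupD)
  then have "commutator x y = x \<otimes>\<^bsub>Dstar\<^esub> y \<otimes>\<^bsub>Dstar\<^esub> inv\<^bsub>Dstar\<^esub> x \<otimes>\<^bsub>Dstar\<^esub> inv\<^bsub>Dstar\<^esub> y"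
    by (simp add: commutator_def inv_Dstar)
  then have "commutator x y \<in> derived_set Dstar M" using assms(2,3) by blast
  then show ?thesis unfolding derived_def by (rule generate.incl)
qed

lemma abelian_commutators_if_metabelian:
  assumes "mult_subgroup M" "metabelian Dstar M"
  shows "abelian_set Dstar (commutators M)"
proof -
  have "commutators M \<subseteq> derived Dstar M"
    using commutator_in_derived[OF assms(1)] by (auto simp: commutators_def)
  then show ?thesis using assms(2) unfolding metabelian_def abelian_set_Dstar_iff by blast
qed

text \<open>From \<open>x * y = c * y * x\<close> and \<open>x * (y + 1) = d * (y + 1) * x\<close> one gets
  \<open>(c - d) * y = d - 1\<close>: either \<open>c = d = 1\<close>, or \<open>y\<close> is a quotient of elements commuting
  with \<open>x\<close>.\<close>
lemma commute_if_commutators_commute: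
  fixes x y :: "'a::division_ring"
  assumes "commutator x y * x = x * commutator x y"
    and "commutator x (y + 1) * x = x * commutator x (y + 1)"
  shows "x * y = y * x"
proof (cases "x = 0")
  case False
  define c d where "c = commutator x y" and "d = commutator x (y + 1)"
  have cx: "c * x = x * c" and dx: "d * x = x * d" using assms by (simp_all add: c_def d_def)
  have "(c * y + 1) * x = (d * y + d) * x"
    using commutator_mult_swap[of x y] commutator_mult_swap[of x "y + 1"]
    by (simp add: c_def d_def algebra_simps)
  then have eq: "c * y + 1 = d * y + d" using False by simp
  show ?thesis
  proof (cases "c = d")
    case True
    then have "c = 1" using eq by simp
    then show ?thesis using commutator_mult_swap[of x y] by (simp add: c_def)
  next
    case False
    have "(c - d) * y = d - 1" using eq by (simp add: algebra_simps)
    then have y: "y = inverse (c - d) * (d - 1)"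
      using False by (metis left_inverse mult.assoc mult_1 right_minus_eq)
    have "inverse (c - d) * x = x * inverse (c - d)"
      using cx dx by (intro mult_commute_imp_mult_inverse_commute) (simp add: algebra_simps)
    moreover have "(d - 1) * x = x * (d - 1)" using dx by (simp add: algebra_simps)
    ultimately show ?thesis unfolding y by (metis mult.assoc)
  qed
qed simp

section \<open>Division subrings\<close>

lemma division_subringD:
  assumes "division_subring S"
  shows "0 \<in> S" and "1 \<in> S"
    and "x \<in> S \<Longrightarrow> y \<in> S \<Longrightarrow> x + y \<in> S" and "x \<in> S \<Longrightarrow> y \<in> S \<Longrightarrow> x - y \<in> S"
    and "x \<in> S \<Longrightarrow> y \<in> S \<Longrightarrow> x * y \<in> S" and "x \<in> S \<Longrightarrow> inverse x \<in> S"
  using assms unfolding division_subring_def by (metis diff_conv_add_uminus)+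

lemma division_subringI:
  assumes "0 \<in> S" "1 \<in> S" "\<And>x y. x \<in> S \<Longrightarrow> y \<in> S \<Longrightarrow> x + y \<in> S"
    "\<And>x y. x \<in> S \<Longrightarrow> y \<in> S \<Longrightarrow> x * y \<in> S" "\<And>x. x \<in> S \<Longrightarrow> - x \<in> S"
    "\<And>x. x \<in> S \<Longrightarrow> inverse x \<in> S"
  shows "division_subring S"
  using assms by (simp add: division_subring_def)

lemma division_subring_UNIV: "division_subring UNIV"
  by (simp add: division_subring_def)

lemma division_subring_gen: "division_subring (gen_division_subring X)"
  unfolding gen_division_subring_def division_subring_def by auto

lemma gen_division_subring_superset: "X \<subseteq> gen_division_subring X"
  unfolding gen_division_subring_def by auto

lemma gen_division_subring_least:
  "division_subring S \<Longrightarrow> X \<subseteq> S \<Longrightarrow> gen_division_subring X \<subseteq> S"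
  unfolding gen_division_subring_def by auto

lemma mult_subgroup_nonzero: "division_subring K \<Longrightarrow> mult_subgroup (K - {0})"
  by (auto simp: mult_subgroup_def division_subringD)

lemma division_subring_conj_preimage:
  fixes b :: "'a::division_ring"
  assumes "b \<noteq> 0" and S: "division_subring S"
  shows "division_subring {z. b * z * inverse b \<in> S}"
proof (rule division_subringI, unfold mem_Collect_eq)
  show "b * 0 * inverse b \<in> S" "b * 1 * inverse b \<in> S"
    using division_subringD[OF S] assms(1) by simp_all
next
  fix x y assume x: "b * x * inverse b \<in> S" and y: "b * y * inverse b \<in> S"
  show "b * (x + y) * inverse b \<in> S"
    using division_subringD(3)[OF S x y] by (simp add: algebra_simps)
  show "b * (x * y) * inverse b \<in> S"
    using division_subringD(5)[OF S x y] by (simp add: conj_mult[OF assms(1)])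
next
  fix x assume x: "b * x * inverse b \<in> S"
  show "b * - x * inverse b \<in> S"
    using division_subringD(4)[OF S division_subringD(1)[OF S] x] by simp
  show "b * inverse x * inverse b \<in> S"
    using division_subringD(6)[OF S x] by (simp add: conj_inverse[OF assms(1)])
qed

lemma normalizes_gen_division_subring:
  assumes "0 \<notin> M" "normalizes M X"
  shows "normalizes M (gen_division_subring X)"
  unfolding normalizes_def
proof (intro ballI)
  fix m s assume "m \<in> M" "s \<in> gen_division_subring X"
  moreover have "gen_division_subring X \<subseteq> {z. m * z * inverse m \<in> gen_division_subring X}"
    using assms \<open>m \<in> M\<close> gen_division_subring_superset[of X]
    by (intro gen_division_subring_least division_subring_conj_preimage division_subring_gen)
      (auto simp: normalizes_def)
  ultimately show "m * s * inverse m \<in> gen_division_subring X" by auto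
qed

lemma normalizes_center: "normalizes M center"
  unfolding normalizes_def
proof (intro ballI)
  fix m z :: 'a assume "z \<in> center"
  then have "m * z * inverse m = z * (m * inverse m)" by (simp add: center_def mult.assoc)
  then show "m * z * inverse m \<in> center"
    using \<open>z \<in> center\<close> by (cases "m = 0") (simp_all add: center_def)
qed

lemma normalizes_Un: "normalizes M X \<Longrightarrow> normalizes M Y \<Longrightarrow> normalizes M (X \<union> Y)"
  unfolding normalizes_def by blast

lemma normalizes_gen_center_Un:
  "0 \<notin> M \<Longrightarrow> normalizes M Y \<Longrightarrow> normalizes M (gen_division_subring (center \<union> Y))"
  by (intro normalizes_gen_division_subring normalizes_Un normalizes_center)

definition centralizer :: "'a::division_ring set \<Rightarrow> 'a set" where
  "centralizer X = {z. \<forall>x\<in>X. z * x = x * z}"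

lemma division_subring_centralizer: "division_subring (centralizer X)"
proof (rule division_subringI, unfold centralizer_def mem_Collect_eq)
  fix u v assume u: "\<forall>x\<in>X. u * x = x * u" and v: "\<forall>x\<in>X. v * x = x * v"
  show "\<forall>x\<in>X. (u + v) * x = x * (u + v)" using u v by (simp add: algebra_simps)
  have "u * v * x = x * (u * v)" if "x \<in> X" for x
  proof -
    have "u * v * x = u * (x * v)" using v that by (simp add: mult.assoc)
    also have "\<dots> = x * (u * v)" using u that by (simp add: mult.assoc[symmetric])
    finally show ?thesis .
  qed
  then show "\<forall>x\<in>X. u * v * x = x * (u * v)" by blast
next
  fix u assume u: "\<forall>x\<in>X. u * x = x * u"
  then show "\<forall>x\<in>X. - u * x = x * - u" by simp
  show "\<forall>x\<in>X. inverse u * x = x * inverse u"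
    using u by (simp add: mult_commute_imp_mult_inverse_commute)
qed auto

lemma abelian_gen_division_subring:
  assumes "abelian_set Dstar X"
  shows "abelian_set Dstar (gen_division_subring X)"
proof -
  have "X \<subseteq> centralizer X" using assms by (auto simp: centralizer_def abelian_set_Dstar_iff)
  then have "gen_division_subring X \<subseteq> centralizer X"
    by (intro gen_division_subring_least division_subring_centralizer)
  then have "X \<subseteq> centralizer (gen_division_subring X)"
    by (auto simp: centralizer_def)
  then have "gen_division_subring X \<subseteq> centralizer (gen_division_subring X)"
    by (intro gen_division_subring_least division_subring_centralizer)
  then show ?thesis by (auto simp: centralizer_def abelian_set_Dstar_iff)
qed

lemma abelian_gen_center_Un:
  "abelian_set Dstar Y \<Longrightarrow> abelian_set Dstar (gen_division_subring (center \<union> Y))"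
  by (intro abelian_gen_division_subring) (auto simp: center_def abelian_set_Dstar_iff)

lemma mem_center_if_commutes_with_generators:
  assumes "gen_division_subring (center \<union> Y) = UNIV" "\<forall>y\<in>Y. c * y = y * c"
  shows "c \<in> center"
proof -
  have "center \<union> Y \<subseteq> centralizer {c}" using assms(2) by (auto simp: centralizer_def center_def)
  then have "gen_division_subring (center \<union> Y) \<subseteq> centralizer {c}"
    by (intro gen_division_subring_least division_subring_centralizer)
  then have "x * c = c * x" for x using assms(1) by (auto simp: centralizer_def)
  then show ?thesis by (simp add: center_def)
qed

section \<open>The theorems of Cartan-Brauer-Hua and Hua\<close>

lemma cartan_brauer_hua_commute:
  fixes a b :: "'a::division_ring"
  assumes S: "division_subring S" and "a \<in> S" "b \<notin> S"
    and conj: "b * a * inverse b \<in> S" "(1 + b) * a * inverse (1 + b) \<in> S"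
  shows "a * b = b * a"
proof -
  note S_closed = division_subringD[OF S]
  have "1 + b \<notin> S" using \<open>b \<notin> S\<close> S_closed(2) S_closed(4)[of "1 + b" 1] by auto
  then have "b \<noteq> 0" "1 + b \<noteq> 0" using S_closed(1,2) by auto
  define a1 a2 where "a1 = b * a * inverse b" and "a2 = (1 + b) * a * inverse (1 + b)"
  have e1: "b * a = a1 * b" and e2: "(1 + b) * a = a2 * (1 + b)"
    using \<open>b \<noteq> 0\<close> \<open>1 + b \<noteq> 0\<close> by (simp_all add: a1_def a2_def mult.assoc)
  then have e3: "(a1 - a2) * b = a2 - a" by (simp add: algebra_simps)
  have "a1 = a2"
  proof (rule ccontr)
    assume "a1 \<noteq> a2"
    then have "b = inverse (a1 - a2) * (a2 - a)"
      using e3 by (metis left_inverse mult.assoc mult_1 right_minus_eq)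
    moreover have "a1 \<in> S" "a2 \<in> S" using conj by (simp_all add: a1_def a2_def)
    ultimately have "b \<in> S" using S_closed(4-6) \<open>a \<in> S\<close> by metis
    then show False using \<open>b \<notin> S\<close> by simp
  qed
  then show ?thesis using e1 e3 by simp
qed

theorem cartan_brauer_hua:
  fixes R S :: "'a::division_ring set"
  assumes R: "division_subring R" and S: "division_subring S" and "S \<subseteq> R"
    and "normalizes (R - S) S"
  shows "S = R \<or> (\<forall>a\<in>S. \<forall>r\<in>R. a * r = r * a)"
proof (cases "S = R")
  case False
  then obtain b where b: "b \<in> R" "b \<notin> S" using \<open>S \<subseteq> R\<close> by auto
  have outside: "a * r = r * a" if "a \<in> S" "r \<in> R" "r \<notin> S" for a r
  proof (rule cartan_brauer_hua_commute[OF S \<open>a \<in> S\<close> \<open>r \<notin> S\<close>])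
    have "1 + r \<notin> S"
      using \<open>r \<notin> S\<close> division_subringD(2)[OF S] division_subringD(4)[OF S, of "1 + r" 1] by auto
    moreover have "1 + r \<in> R" using \<open>r \<in> R\<close> division_subringD(2,3)[OF R] by auto
    ultimately show "r * a * inverse r \<in> S" "(1 + r) * a * inverse (1 + r) \<in> S"
      using assms(4) that by (auto simp: normalizes_def)
  qed
  have "a * r = r * a" if "a \<in> S" "r \<in> R" for a r
  proof (cases "r \<in> S")
    case True
    have "r + b \<notin> S" using b True division_subringD(4)[OF S, of "r + b" r] by auto
    moreover have "r + b \<in> R" using b \<open>r \<in> R\<close> division_subringD(3)[OF R] by auto
    ultimately have "a * (r + b) = (r + b) * a" using outside \<open>a \<in> S\<close> by blast
    with outside[OF \<open>a \<in> S\<close> b] show ?thesis by (simp add: algebra_simps)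
  qed (use outside that in blast)
  then show ?thesis by blast
qed simp

theorem hua_commutative:
  fixes R :: "'a::division_ring set"
  assumes R: "division_subring R" and comm: "abelian_set Dstar (commutators R)"
  shows "abelian_set Dstar R"
proof -
  define T where "T = gen_division_subring (commutators R)"
  have "commutators R \<subseteq> R"
    using division_subringD[OF R] by (auto simp: commutators_def commutator_def)
  then have "T \<subseteq> R" unfolding T_def by (rule gen_division_subring_least[OF R])
  have "normalizes (R - {0}) R"
    using division_subringD[OF R] by (auto simp: normalizes_def)
  then have "normalizes (R - {0}) T"
    unfolding T_def by (intro normalizes_gen_division_subring normalizes_commutators) auto
  moreover have "0 \<in> T" using division_subringD(1)[OF division_subring_gen] by (simp add: T_def)
  ultimately have "normalizes (R - T) T" by (auto simp: normalizes_def)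
  moreover have "division_subring T" unfolding T_def by (rule division_subring_gen)
  ultimately have "T = R \<or> (\<forall>t\<in>T. \<forall>r\<in>R. t * r = r * t)"
    using cartan_brauer_hua[OF R _ \<open>T \<subseteq> R\<close>] by blast
  then show ?thesis
  proof (elim disjE)
    assume "T = R"
    then show ?thesis using abelian_gen_division_subring[OF comm] by (simp add: T_def)
  next
    assume central: "\<forall>t\<in>T. \<forall>r\<in>R. t * r = r * t"
    show ?thesis unfolding abelian_set_Dstar_iff
    proof (intro ballI)
      fix x y assume "x \<in> R" "y \<in> R"
      then have "y + 1 \<in> R" using division_subringD[OF R] by auto
      then have "commutator x y \<in> T" "commutator x (y + 1) \<in> T"
        using \<open>x \<in> R\<close> \<open>y \<in> R\<close> gen_division_subring_superset[of "commutators R"]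
        by (auto simp: T_def commutators_def)
      then show "x * y = y * x"
        using central \<open>x \<in> R\<close> by (blast intro: commute_if_commutators_commute)
    qed
  qed
qed

lemma abelian_if_nonzero_subset_metabelian:
  assumes "mult_subgroup M" "metabelian Dstar M" and R: "division_subring R" and "R - {0} \<subseteq> M"
  shows "abelian_set Dstar R"
proof (rule hua_commutative[OF R])
  have "commutators R \<subseteq> insert 0 (commutators M)"
  proof
    fix c assume "c \<in> commutators R"
    then obtain x y where "x \<in> R" "y \<in> R" "c = commutator x y" by (auto simp: commutators_def)
    then show "c \<in> insert 0 (commutators M)"
      using assms(4) by (cases "x = 0 \<or> y = 0") (auto simp: commutators_def)
  qed
  moreover have "abelian_set Dstar (commutators M)"
    using abelian_commutators_if_metabelian[OF assms(1,2)] .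
  ultimately show "abelian_set Dstar (commutators R)"
    unfolding abelian_set_Dstar_iff by (metis insert_iff mult_zero_left mult_zero_right subsetD)
qed

section \<open>Division subrings normalized by a maximal subgroup\<close>

theorem maximal_subgroup_normalized_division_subring:
  fixes M S :: "'a::division_ring set"
  assumes maxM: "maximal_subgroup M" and S: "division_subring S" and "normalizes M S"
  shows "S = UNIV \<or> S \<subseteq> center \<or> S - {0} \<subseteq> M"
proof -
  define H where "H = {x. x \<noteq> 0 \<and> normalizes {x, inverse x} S}"
  have "mult_subgroup H" unfolding mult_subgroup_def
  proof (intro conjI ballI)
    fix x y assume "x \<in> H" "y \<in> H"
    then have nz: "x \<noteq> 0" "y \<noteq> 0" and "normalizes {x, inverse x} S" "normalizes {y, inverse y} S"
      by (simp_all add: H_def)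
    then have "(x * y) * s * inverse (x * y) \<in> S"
      and "(inverse y * inverse x) * s * inverse (inverse y * inverse x) \<in> S" if "s \<in> S" for s
      using that by (simp_all add: conj_conj normalizes_def)
    moreover have "inverse (x * y) = inverse y * inverse x"
      and "inverse (inverse y * inverse x) = x * y"
      using nz by (simp_all add: nonzero_inverse_mult_distrib)
    ultimately show "x * y \<in> H" using nz by (simp add: H_def normalizes_def)
  qed (auto simp: H_def normalizes_def insert_commute)
  moreover have "M \<subseteq> H"
  proof
    fix m assume "m \<in> M"
    then have "m \<noteq> 0" "{m, inverse m} \<subseteq> M"
      using mult_subgroupD[OF maximal_subgroup_mult_subgroup[OF maxM]] by auto
    then show "m \<in> H" using assms(3) by (auto simp: H_def normalizes_def)
  qed
  ultimately consider "H = - {0}" | "H = M" using maximal_subgroup_maximal[OF maxM] by blast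
  then show ?thesis
  proof cases
    case 1
    have "b \<in> H" if "b \<notin> S" for b
      using that division_subringD(1)[OF S] 1 by auto
    then have "normalizes (UNIV - S) S" by (auto simp: H_def normalizes_def)
    then have "S = UNIV \<or> (\<forall>a\<in>S. \<forall>r. a * r = r * a)"
      using cartan_brauer_hua[OF division_subring_UNIV S] by blast
    then show ?thesis by (auto simp: center_def)
  next
    case 2
    have "S - {0} \<subseteq> H"
      using division_subringD(5,6)[OF S] by (auto simp: H_def normalizes_def)
    then show ?thesis using 2 by blast
  qed
qed

lemma max_abelian_normal_inter_eq:
  fixes M A K :: "'a::division_ring set"
  assumes M: "mult_subgroup M" and maxA: "max_abelian_normal Dstar M A"
    and K: "division_subring K" and "abelian_set Dstar K" "normalizes M K" "A \<subseteq> K"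
  shows "K \<inter> M = A"
proof -
  note A = maxA[unfolded max_abelian_normal_Dstar_iff[OF M]]
  have "K \<inter> M = (K - {0}) \<inter> M" using mult_subgroupD(1)[OF M] by blast
  then have "mult_subgroup (K \<inter> M)"
    using mult_subgroup_Int[OF mult_subgroup_nonzero[OF K] M] by simp
  moreover have "normalizes M (K \<inter> M)"
    using \<open>normalizes M K\<close> normalizes_self[OF M] by (auto simp: normalizes_def)
  moreover have "abelian_set Dstar (K \<inter> M)"
    using \<open>abelian_set Dstar K\<close> unfolding abelian_set_Dstar_iff by blast
  moreover have "A \<subseteq> K \<inter> M" using A \<open>A \<subseteq> K\<close> by blast
  ultimately show ?thesis using A by blast
qed

lemma normalized_division_subring_eq_UNIV_or_inter_eq:
  fixes M A K :: "'a::division_ring set"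
  assumes maxM: "maximal_subgroup M" and metaM: "metabelian Dstar M"
    and maxA: "max_abelian_normal Dstar M A"
    and K: "division_subring K" and "normalizes M K" "A \<subseteq> K"
  shows "K = UNIV \<or> K \<inter> M = A"
proof -
  note M = maximal_subgroup_mult_subgroup[OF maxM]
  consider "K = UNIV" | "K \<subseteq> center" | "K - {0} \<subseteq> M"
    using maximal_subgroup_normalized_division_subring[OF maxM K \<open>normalizes M K\<close>] by blast
  then show ?thesis
  proof cases
    case 2
    then have "abelian_set Dstar K" by (auto simp: center_def abelian_set_Dstar_iff)
    then show ?thesis using max_abelian_normal_inter_eq[OF M maxA K] assms(5,6) by blast
  next
    case 3
    then have "abelian_set Dstar K"
      using abelian_if_nonzero_subset_metabelian[OF M metaM K] by blast
    then show ?thesis using max_abelian_normal_inter_eq[OF M maxA K] assms(5,6) by blast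
  qed simp
qed

text \<open>Here every commutator of \<open>a \<in> A\<close> and \<open>e \<in> E\<close> lies in \<open>A \<inter> E\<close>, hence commutes with the
  generators of \<open>D\<close> and is central.\<close>
lemma max_abelian_normal_commutes_with_subring:
  fixes M A E :: "'a::division_ring set"
  assumes M: "mult_subgroup M" and maxA: "max_abelian_normal Dstar M A"
    and E: "division_subring E" and abE: "abelian_set Dstar E" and "normalizes M E"
    and "E - {0} \<subseteq> M" and gen: "gen_division_subring (center \<union> (A \<union> E)) = UNIV"
  shows "abelian_set Dstar (A \<union> E)"
proof -
  note A = max_abelian_normal_DstarD[OF M maxA]
  have central: "commutator a e \<in> center" if "a \<in> A" "e \<in> E" for a e
  proof (cases "e = 0")
    case False
    then have "e \<in> M" "a \<in> M" using that assms(6) A by auto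
    have "commutator a e = a * (e * inverse a * inverse e)" by (simp add: commutator_def mult.assoc)
    moreover have "e * inverse a * inverse e \<in> A"
      using A(3) \<open>e \<in> M\<close> mult_subgroupD(4)[OF A(1) \<open>a \<in> A\<close>] by (auto simp: normalizes_def)
    ultimately have "commutator a e \<in> A" using mult_subgroupD(3)[OF A(1) \<open>a \<in> A\<close>] by simp
    moreover have "commutator a e \<in> E"
      using \<open>normalizes M E\<close> \<open>a \<in> M\<close> that division_subringD(5,6)[OF E]
      by (auto simp: commutator_def normalizes_def)
    ultimately have "\<forall>y\<in>A \<union> E. commutator a e * y = y * commutator a e"
      using A abE unfolding abelian_set_Dstar_iff by blast
    then show ?thesis by (rule mem_center_if_commutes_with_generators[OF gen])
  qed (simp add: center_def)
  have "a * e = e * a" if "a \<in> A" "e \<in> E" for a e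
  proof (rule commute_if_commutators_commute)
    have "e + 1 \<in> E" using \<open>e \<in> E\<close> division_subringD(2,3)[OF E] by blast
    then show "commutator a e * a = a * commutator a e"
      and "commutator a (e + 1) * a = a * commutator a (e + 1)"
      using central that by (simp_all add: center_def)
  qed
  then show ?thesis using A abE unfolding abelian_set_Dstar_iff by (metis Un_iff)
qed

lemma commutators_subset_max_abelian_normal:
  fixes M A :: "'a::division_ring set"
  assumes noncomm: "\<not> abelian_set Dstar (UNIV :: 'a set)"
    and maxM: "maximal_subgroup M" and metaM: "metabelian Dstar M"
    and maxA: "max_abelian_normal Dstar M A"
  shows "commutators M \<subseteq> A"
proof -
  note M = maximal_subgroup_mult_subgroup[OF maxM]
  note A = max_abelian_normal_DstarD[OF M maxA]
  have "0 \<notin> M" using mult_subgroupD(1)[OF M] by blast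
  define E where "E = gen_division_subring (center \<union> commutators M)"
  have E: "division_subring E" unfolding E_def by (rule division_subring_gen)
  have abE: "abelian_set Dstar E"
    unfolding E_def
    by (rule abelian_gen_center_Un[OF abelian_commutators_if_metabelian[OF M metaM]])
  have "normalizes M E" unfolding E_def
    using \<open>0 \<notin> M\<close> normalizes_self[OF M] by (intro normalizes_gen_center_Un normalizes_commutators)
  define R where "R = gen_division_subring (center \<union> (A \<union> E))"
  have R: "division_subring R" unfolding R_def by (rule division_subring_gen)
  have "normalizes M R"
    unfolding R_def using \<open>0 \<notin> M\<close> A \<open>normalizes M E\<close>
    by (intro normalizes_gen_center_Un normalizes_Un)
  have "A \<union> E \<subseteq> R"
    using gen_division_subring_superset[of "center \<union> (A \<union> E)"] by (auto simp: R_def)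
  moreover have "commutators M \<subseteq> E"
    using gen_division_subring_superset[of "center \<union> commutators M"] by (auto simp: E_def)
  ultimately have "A \<subseteq> R" "commutators M \<subseteq> R" by auto
  have "R \<noteq> UNIV"
  proof
    assume "R = UNIV"
    consider "E = UNIV" | "E \<subseteq> center" | "E - {0} \<subseteq> M"
      using maximal_subgroup_normalized_division_subring[OF maxM E \<open>normalizes M E\<close>] by blast
    then have "abelian_set Dstar (A \<union> E)"
    proof cases
      case 1
      then show ?thesis using abE noncomm by metis
    next
      case 2
      show ?thesis unfolding abelian_set_Dstar_iff
      proof (intro ballI)
        fix x y assume "x \<in> A \<union> E" "y \<in> A \<union> E"
        then consider "x \<in> A" "y \<in> A" | "x \<in> center" | "y \<in> center" using 2 by blast
        then show "x * y = y * x"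
          using A(4) by cases (auto simp: center_def abelian_set_Dstar_iff)
      qed
    next
      case 3
      then show ?thesis using \<open>R = UNIV\<close> max_abelian_normal_commutes_with_subring[OF M maxA E abE]
        \<open>normalizes M E\<close> by (simp add: R_def)
    qed
    then have "abelian_set Dstar R" unfolding R_def by (rule abelian_gen_center_Un)
    then show False using \<open>R = UNIV\<close> noncomm by metis
  qed
  then have "R \<inter> M = A"
    using normalized_division_subring_eq_UNIV_or_inter_eq[OF maxM metaM maxA R]
      \<open>normalizes M R\<close> \<open>A \<subseteq> R\<close> by blast
  then show ?thesis using \<open>commutators M \<subseteq> R\<close> commutators_subset[OF M] by blast
qed

theorem proposition2p7:
  fixes M A N :: "'a::division_ring set"
  assumes noncomm: "\<exists>x y :: 'a. x * y \<noteq> y * x"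
    and maxM: "maximal_subgroup M"
    and irrM: "irreducible_subgroup M"
    and metaM: "metabelian Dstar M"
    and locM: "locally_solvable Dstar M"
    and maxA: "max_abelian_normal Dstar M A"
    and subN: "subgroup N (Dstar\<lparr>carrier := M\<rparr>)"
    and AN: "A \<subset> N"
  shows "irreducible_subgroup N"
proof -
  note M = maximal_subgroup_mult_subgroup[OF maxM]
  have N: "mult_subgroup N" "N \<subseteq> M" using subN subgroup_Dstar_restrict_iff[OF M] by auto
  have "commutators M \<subseteq> A"
    using noncomm by (intro commutators_subset_max_abelian_normal[OF _ maxM metaM maxA])
      (auto simp: abelian_set_Dstar_iff)
  then have "normalizes M N" using N AN by (intro normalizes_if_commutators_subset) auto
  define K where "K = gen_division_subring (center \<union> N)"
  have "normalizes M K" unfolding K_def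
    using \<open>normalizes M N\<close> mult_subgroupD(1)[OF M] by (intro normalizes_gen_center_Un) auto
  moreover have "N \<subseteq> K" using gen_division_subring_superset[of "center \<union> N"] by (auto simp: K_def)
  ultimately have "K = UNIV \<or> K \<inter> M = A"
    using normalized_division_subring_eq_UNIV_or_inter_eq[OF maxM metaM maxA division_subring_gen]
      AN by (auto simp: K_def)
  then show ?thesis using \<open>N \<subseteq> K\<close> N AN by (auto simp: irreducible_subgroup_def K_def)
qed

end
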